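(* Let $l,d\ge 1$ and let $(X,Y)$ be a random vector in $\mathbb{R}^l\times\mathbb{R}^d$ with joint law $W$. Let $\rho:\mathbb{R}^l\to\mathbb{R}$ be a polynomial of degree at most $1$ with $\rho(X)\neq 0$ almost surely, and assume that the random vector $Z:=Y/\rho(X)\in\mathbb{R}^d$ is independent of $X$. Let $W_X$ and $W_Z$ denote the laws of $X$ and $Z$, and assume $X$ and $Z$ have finite moments of all orders. For each $m\in\mathbb{N}=\{0,1,2,\dots\}$ let $\{P^{(m)}_k:k\in\mathbb{N}^l\}$ be polynomials on $\mathbb{R}^l$, $P^{(m)}_k$ of total degree $|k|$, such that $\int P^{(m)}_kP^{(m)}_{k'}\,\rho(x)^{2m}\,W_X(dx)=0$ whenever $k\neq k'$; and let $\{R_s:s\in\mathbb{N}^d\}$ be polynomials on $\mathbb{R}^d$, $R_s$ of total degree $|s|$, such that $\int R_sR_{s'}\,dW_Z=0$ whenever $s\ne s'$. For $n=(k,s)\in\mathbb{N}^{l}\times\mathbb{N}^d$ define $$G_n(x,y)=P^{(|s|)}_k(x)\,\rho(x)^{|s|}\,R_s\!\left(\frac{y}{\rho(x)}\right).$$ Then each $G_n$ is a polynomial in $(x,y)$ of total degree $|n|=|k|+|s|$, and for $n=(k,s)$, $n'=(k',s')$, $$\int G_n G_{n'}\,dW=\delta_{nn'}\int \big(P^{(|s|)}_k\big)^2\rho^{2|s|}\,dW_X\int R_s^2\,dW_Z .$$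
   Context: For $z\in\mathbb{R}^d$ (or a multi-index), $|z|=\sum_i z_i$. $\delta_{nn'}$ is the Kronecker delta. *)

theory Defs
  imports "HOL-Probability.Probability"
begin

text \<open>Multi-indices in N^n are functions 'n \<Rightarrow> nat on a finite index type; |a| = sum a UNIV.\<close>

definition mono_fn :: "('n::finite \<Rightarrow> nat) \<Rightarrow> real ^ 'n \<Rightarrow> real" where
  "mono_fn a x = (\<Prod>i\<in>UNIV. (x $ i) ^ (a i))"

definition poly_fn_on :: "('n::finite \<Rightarrow> nat) set \<Rightarrow> (real ^ 'n \<Rightarrow> real) \<Rightarrow> bool" where
  "poly_fn_on S f \<longleftrightarrow> (\<exists>c :: ('n \<Rightarrow> nat) \<Rightarrow> real. finite {a. c a \<noteq> 0} \<and>
      (\<forall>a. c a \<noteq> 0 \<longrightarrow> a \<in> S) \<and> (\<forall>x. f x = (\<Sum>a\<in>{a. c a \<noteq> 0}. c a * mono_fn a x)))"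

definition poly_deg_le :: "nat \<Rightarrow> (real ^ 'n::finite \<Rightarrow> real) \<Rightarrow> bool" where
  "poly_deg_le D f \<longleftrightarrow> poly_fn_on {a. sum a UNIV \<le> D} f"

text \<open>Total degree exactly D (the zero polynomial has no degree).\<close>
definition poly_deg_eq :: "nat \<Rightarrow> (real ^ 'n::finite \<Rightarrow> real) \<Rightarrow> bool" where
  "poly_deg_eq D f \<longleftrightarrow> poly_deg_le D f \<and> \<not> poly_fn_on {a. sum a UNIV < D} f"

definition poly2_fn_on :: "(('l::finite \<Rightarrow> nat) \<times> ('d::finite \<Rightarrow> nat)) set
    \<Rightarrow> ((real ^ 'l) \<times> (real ^ 'd) \<Rightarrow> real) \<Rightarrow> bool" where
  "poly2_fn_on S f \<longleftrightarrow> (\<exists>c :: ('l \<Rightarrow> nat) \<times> ('d \<Rightarrow> nat) \<Rightarrow> real. finite {a. c a \<noteq> 0} \<and>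
      (\<forall>a. c a \<noteq> 0 \<longrightarrow> a \<in> S) \<and>
      (\<forall>x y. f (x, y) = (\<Sum>a\<in>{a. c a \<noteq> 0}. c a * mono_fn (fst a) x * mono_fn (snd a) y)))"

definition poly2_deg_eq :: "nat \<Rightarrow> ((real ^ 'l::finite) \<times> (real ^ 'd::finite) \<Rightarrow> real) \<Rightarrow> bool" where
  "poly2_deg_eq D f \<longleftrightarrow> poly2_fn_on {a. sum (fst a) UNIV + sum (snd a) UNIV \<le> D} f \<and>
     \<not> poly2_fn_on {a. sum (fst a) UNIV + sum (snd a) UNIV < D} f"

definition Gfun :: "(nat \<Rightarrow> ('l::finite \<Rightarrow> nat) \<Rightarrow> real ^ 'l \<Rightarrow> real) \<Rightarrow> (real ^ 'l \<Rightarrow> real)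
    \<Rightarrow> (('d::finite \<Rightarrow> nat) \<Rightarrow> real ^ 'd \<Rightarrow> real) \<Rightarrow> ('l \<Rightarrow> nat) \<Rightarrow> ('d \<Rightarrow> nat)
    \<Rightarrow> (real ^ 'l) \<times> (real ^ 'd) \<Rightarrow> real" where
  "Gfun P \<rho> R k s = (\<lambda>(x, y). P (sum s UNIV) k x * \<rho> x ^ (sum s UNIV) * R s (y /\<^sub>R \<rho> x))"

end

theory Submission
  imports Defs
begin

text \<open>
  Write S = |s| and expand R_s(z) = \<Sum>_a c_a z^a with |a| \<le> S.  Off the zero set
  of \<rho>, the function G_(k,s)(x,y) = P(x) \<rho>(x)^S R_s(y/\<rho>(x)) agrees with P(x) H(\<rho>(x), y),
  where H(r, y) = \<Sum>_a c_a y^a r^(S - |a|) is the homogenization of R_s.  Since \<rho> has degree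
  at most 1, this is a polynomial in (x,y) of degree at most |k| + S.  Its degree is exactly
  |k| + S: along a ray t \<mapsto> (t x0, t y) the ratio G(t x0, t y) / t^(|k|+S) tends to
  lP * H(l, y), where lP \<noteq> 0 is the top-degree form of P at a suitable x0 and l is the linear
  part of \<rho> at x0; H(l, -) is not identically zero, whereas the same ratio tends to 0 for
  every polynomial of lower degree.

  For the orthogonality relation, G_n G_n' = F(X) H(Z) with polynomials F, H; independence
  of X and Z = Y/\<rho>(X) splits the integral into \<integral>F dW_X \<cdot> \<integral>H dW_Z (finite by the moment
  assumptions), and orthogonality of the P^(m) and of the R_s finishes the proof.
\<close>

lemma mono_fn_add: "mono_fn (\<lambda>i. a i + b i) x = mono_fn a x * mono_fn b x"
  unfolding mono_fn_def by (simp add: power_add prod.distrib)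

lemma mono_fn_scale: "mono_fn a (t *\<^sub>R x) = t ^ sum a UNIV * mono_fn a x"
  unfolding mono_fn_def by (simp add: power_mult_distrib prod.distrib power_sum)

lemma mono_fn_zero: "mono_fn (\<lambda>_. 0) x = 1"
  unfolding mono_fn_def by simp

text \<open>Monomials are dominated by powers of the norm; this gives integrability from moments.\<close>
lemma mono_fn_bound: "\<bar>mono_fn a x\<bar> \<le> norm x ^ sum a UNIV"
  unfolding mono_fn_def power_sum abs_prod
  by (intro prod_mono) (auto simp: power_abs intro!: power_mono component_le_norm_cart)

definition poly_span :: "('e \<Rightarrow> nat) \<Rightarrow> ('e \<Rightarrow> 'p \<Rightarrow> real) \<Rightarrow> nat \<Rightarrow> ('p \<Rightarrow> real) \<Rightarrow> bool" where
  "poly_span deg M D f \<longleftrightarrow>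
     (\<exists>A c. finite A \<and> (\<forall>a\<in>A. deg a \<le> D) \<and> (\<forall>p. f p = (\<Sum>a\<in>A. c a * M a p)))"

text \<open>Extending a sum by zero coefficients, to put two expansions on a common support.\<close>
lemma sum_extend_by_zero:
  fixes c M :: "'a \<Rightarrow> real"
  assumes "finite B" "A \<subseteq> B"
  shows "(\<Sum>a\<in>A. c a * M a) = (\<Sum>a\<in>B. (if a \<in> A then c a else 0) * M a)"
proof -
  have "(\<Sum>a\<in>B. (if a \<in> A then c a else 0) * M a) = (\<Sum>a\<in>B. if a \<in> A then c a * M a else 0)"
    by (intro sum.cong) auto
  also have "\<dots> = (\<Sum>a\<in>B \<inter> A. c a * M a)" by (simp add: sum.If_cases assms)
  also have "B \<inter> A = A" using assms by auto
  finally show ?thesis by simp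
qed

lemma sum_mult_collect:
  fixes c d M :: "'a \<Rightarrow> real"
  assumes "finite A" "finite B" "\<And>a b. M (pl a b) = M a * M b"
  shows "(\<Sum>a\<in>A. c a * M a) * (\<Sum>b\<in>B. d b * M b) =
    (\<Sum>e\<in>case_prod pl ` (A \<times> B). (\<Sum>ab\<in>{ab\<in>A \<times> B. case_prod pl ab = e}. c (fst ab) * d (snd ab)) * M e)"
proof -
  have "(\<Sum>a\<in>A. c a * M a) * (\<Sum>b\<in>B. d b * M b) =
      (\<Sum>ab\<in>A \<times> B. c (fst ab) * d (snd ab) * M (case_prod pl ab))"
    unfolding sum_product sum.cartesian_product by (intro sum.cong) (auto simp: assms mult_ac)
  also have "\<dots> = (\<Sum>e\<in>case_prod pl ` (A \<times> B).
      \<Sum>ab\<in>{ab\<in>A \<times> B. case_prod pl ab = e}. c (fst ab) * d (snd ab) * M (case_prod pl ab))"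
    by (rule sum.image_gen) (use assms in auto)
  also have "\<dots> = (\<Sum>e\<in>case_prod pl ` (A \<times> B).
      (\<Sum>ab\<in>{ab\<in>A \<times> B. case_prod pl ab = e}. c (fst ab) * d (snd ab)) * M e)"
    by (intro sum.cong refl) (auto simp: sum_distrib_right)
  finally show ?thesis .
qed

locale graded_monomials =
  fixes deg :: "'e \<Rightarrow> nat" and M :: "'e \<Rightarrow> 'p \<Rightarrow> real" and pl :: "'e \<Rightarrow> 'e \<Rightarrow> 'e" and z :: 'e
  assumes M_pl: "M (pl a b) p = M a p * M b p" and deg_pl: "deg (pl a b) = deg a + deg b"
    and M_z: "M z p = 1" and deg_z: "deg z = 0"
begin

lemma poly_span_zero: "poly_span deg M D (\<lambda>_. 0)"
  unfolding poly_span_def by (rule exI[of _ "{}"]) simp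

lemma poly_span_const: "poly_span deg M 0 (\<lambda>_. k)"
  unfolding poly_span_def by (rule exI[of _ "{z}"], rule exI[of _ "\<lambda>_. k"]) (simp add: M_z deg_z)

lemma poly_span_add:
  assumes "poly_span deg M D f" "poly_span deg M D g"
  shows "poly_span deg M D (\<lambda>p. f p + g p)"
proof -
  obtain A c where A: "finite A" "\<forall>a\<in>A. deg a \<le> D" "\<forall>p. f p = (\<Sum>a\<in>A. c a * M a p)"
    using assms(1) unfolding poly_span_def by blast
  obtain B d where B: "finite B" "\<forall>a\<in>B. deg a \<le> D" "\<forall>p. g p = (\<Sum>a\<in>B. d a * M a p)"
    using assms(2) unfolding poly_span_def by blast
  show ?thesis unfolding poly_span_def
  proof (intro exI conjI allI)
    show "finite (A \<union> B)" "\<forall>a\<in>A \<union> B. deg a \<le> D" using A B by auto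
    fix p
    show "f p + g p = (\<Sum>a\<in>A \<union> B. ((if a \<in> A then c a else 0) + (if a \<in> B then d a else 0)) * M a p)"
      using A B sum_extend_by_zero[of "A \<union> B" A c "\<lambda>a. M a p"]
        sum_extend_by_zero[of "A \<union> B" B d "\<lambda>a. M a p"]
      by (simp add: distrib_right sum.distrib)
  qed
qed

lemma poly_span_mult:
  assumes "poly_span deg M D1 f" "poly_span deg M D2 g"
  shows "poly_span deg M (D1 + D2) (\<lambda>p. f p * g p)"
proof -
  obtain A c where A: "finite A" "\<forall>a\<in>A. deg a \<le> D1" "\<forall>p. f p = (\<Sum>a\<in>A. c a * M a p)"
    using assms(1) unfolding poly_span_def by blast
  obtain B d where B: "finite B" "\<forall>a\<in>B. deg a \<le> D2" "\<forall>p. g p = (\<Sum>a\<in>B. d a * M a p)"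
    using assms(2) unfolding poly_span_def by blast
  show ?thesis unfolding poly_span_def
  proof (intro exI conjI allI)
    show "finite (case_prod pl ` (A \<times> B))" using A B by simp
    show "\<forall>e\<in>case_prod pl ` (A \<times> B). deg e \<le> D1 + D2"
      using A B by (auto simp: deg_pl add_mono)
    fix p
    show "f p * g p = (\<Sum>e\<in>case_prod pl ` (A \<times> B).
        (\<Sum>ab\<in>{ab\<in>A \<times> B. case_prod pl ab = e}. c (fst ab) * d (snd ab)) * M e p)"
      using A B sum_mult_collect[of A B "\<lambda>a. M a p" pl c d] by (simp add: M_pl)
  qed
qed

lemma poly_span_sum:
  assumes "finite I" "\<And>i. i \<in> I \<Longrightarrow> poly_span deg M D (f i)"
  shows "poly_span deg M D (\<lambda>p. \<Sum>i\<in>I. f i p)"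
  using assms by (induction I rule: finite_induct) (simp_all add: poly_span_zero poly_span_add)

lemma poly_span_power:
  assumes "poly_span deg M D f"
  shows "poly_span deg M (n * D) (\<lambda>p. f p ^ n)"
proof (induction n)
  case 0
  then show ?case using poly_span_const[of 1] by simp
next
  case (Suc n)
  then show ?case using poly_span_mult[OF assms Suc] by simp
qed

end

interpretation vars: graded_monomials "\<lambda>a::'n::finite \<Rightarrow> nat. sum a UNIV" mono_fn "\<lambda>a b i. a i + b i" "\<lambda>_. 0"
  by unfold_locales (auto simp: mono_fn_add mono_fn_zero sum.distrib)

definition pair_deg :: "('l::finite \<Rightarrow> nat) \<times> ('d::finite \<Rightarrow> nat) \<Rightarrow> nat" where
  "pair_deg a = sum (fst a) UNIV + sum (snd a) UNIV"

definition pair_mono :: "('l::finite \<Rightarrow> nat) \<times> ('d::finite \<Rightarrow> nat) \<Rightarrow> (real^'l) \<times> (real^'d) \<Rightarrow> real" where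
  "pair_mono a p = mono_fn (fst a) (fst p) * mono_fn (snd a) (snd p)"

interpretation pair_vars: graded_monomials pair_deg pair_mono
    "\<lambda>a b. (\<lambda>i. fst a i + fst b i, \<lambda>i. snd a i + snd b i)" "(\<lambda>_. 0, \<lambda>_. 0)"
  by unfold_locales (auto simp: pair_mono_def pair_deg_def mono_fn_add mono_fn_zero sum.distrib)

abbreviation "poly_span1 \<equiv> poly_span (\<lambda>a. sum a UNIV) mono_fn"
abbreviation "poly_span2 \<equiv> poly_span pair_deg pair_mono"

lemma poly_fn_onI:
  assumes "finite A" "A \<subseteq> S" "\<And>x. f x = (\<Sum>a\<in>A. c a * mono_fn a x)"
  shows "poly_fn_on S f"
  unfolding poly_fn_on_def
proof (intro exI conjI allI impI)
  let ?c = "\<lambda>a. if a \<in> A then c a else 0"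
  show "finite {a. ?c a \<noteq> 0}" using assms(1) by (rule rev_finite_subset) auto
  show "a \<in> S" if "?c a \<noteq> 0" for a using that assms(2) by (auto split: if_splits)
  fix x
  have "f x = (\<Sum>a\<in>A. ?c a * mono_fn a x)" using assms(3) by simp
  also have "\<dots> = (\<Sum>a\<in>{a. ?c a \<noteq> 0}. ?c a * mono_fn a x)"
    by (rule sum.mono_neutral_right) (use assms(1) in auto)
  finally show "f x = (\<Sum>a\<in>{a. ?c a \<noteq> 0}. ?c a * mono_fn a x)" .
qed

lemma poly_fn_onE:
  assumes "poly_fn_on S f"
  obtains A c where "finite A" "A \<subseteq> S" "\<And>x. f x = (\<Sum>a\<in>A. c a * mono_fn a x)"
  using assms unfolding poly_fn_on_def by blast

lemma poly2_fn_onE: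
  assumes "poly2_fn_on S f"
  obtains A c where "finite A" "A \<subseteq> S"
    "\<And>x y. f (x, y) = (\<Sum>a\<in>A. c a * mono_fn (fst a) x * mono_fn (snd a) y)"
  using assms unfolding poly2_fn_on_def by blast

lemma poly_span1_of_deg_le: "poly_deg_le D f \<Longrightarrow> poly_span1 D f"
  unfolding poly_deg_le_def poly_span_def by (erule poly_fn_onE) auto

lemma poly_span1_of_deg_eq: "poly_deg_eq D f \<Longrightarrow> poly_span1 D f"
  unfolding poly_deg_eq_def by (blast intro: poly_span1_of_deg_le)

lemma poly2_fn_on_of_span2:
  assumes "poly_span2 D f"
  shows "poly2_fn_on {a. sum (fst a) UNIV + sum (snd a) UNIV \<le> D} f"
proof -
  obtain A c where A: "finite A" "\<forall>a\<in>A. pair_deg a \<le> D" "\<forall>p. f p = (\<Sum>a\<in>A. c a * pair_mono a p)"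
    using assms unfolding poly_span_def by blast
  let ?c = "\<lambda>a. if a \<in> A then c a else 0"
  show ?thesis unfolding poly2_fn_on_def
  proof (intro exI conjI allI impI)
    show "finite {a. ?c a \<noteq> 0}" using A(1) by (rule rev_finite_subset) auto
    show "a \<in> {a. sum (fst a) UNIV + sum (snd a) UNIV \<le> D}" if "?c a \<noteq> 0" for a
      using that A(2) by (auto simp: pair_deg_def split: if_splits)
    fix x y
    have "f (x, y) = (\<Sum>a\<in>A. ?c a * mono_fn (fst a) x * mono_fn (snd a) y)"
      using A(3) by (simp add: pair_mono_def mult.assoc)
    also have "\<dots> = (\<Sum>a\<in>{a. ?c a \<noteq> 0}. ?c a * mono_fn (fst a) x * mono_fn (snd a) y)"
      by (rule sum.mono_neutral_right) (use A(1) in auto)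
    finally show "f (x, y) = (\<Sum>a\<in>{a. ?c a \<noteq> 0}. ?c a * mono_fn (fst a) x * mono_fn (snd a) y)" .
  qed
qed

lemma poly_span2_fst:
  assumes "poly_span1 D f"
  shows "poly_span2 D (\<lambda>p. f (fst p))"
proof -
  obtain A c where A: "finite A" "\<forall>a\<in>A. sum a UNIV \<le> D" "\<forall>x. f x = (\<Sum>a\<in>A. c a * mono_fn a x)"
    using assms unfolding poly_span_def by blast
  show ?thesis unfolding poly_span_def
    by (rule exI[of _ "(\<lambda>a. (a, \<lambda>_. 0)) ` A"], rule exI[of _ "\<lambda>a. c (fst a)"])
       (use A in \<open>auto simp: pair_deg_def pair_mono_def mono_fn_zero sum.reindex inj_on_def\<close>)
qed

lemma poly_span2_snd_mono: "poly_span2 (sum a UNIV) (\<lambda>p. mono_fn a (snd p))"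
  unfolding poly_span_def
  by (rule exI[of _ "{(\<lambda>_. 0, a)}"], rule exI[of _ "\<lambda>_. 1"])
     (auto simp: pair_deg_def pair_mono_def mono_fn_zero)

subsection \<open>Scaling limits detect the exact degree\<close>

lemma scaled_sum_limit:
  fixes deg :: "'a \<Rightarrow> nat" and c v :: "'a \<Rightarrow> real"
  assumes "finite A" "\<forall>a\<in>A. deg a \<le> D"
  shows "((\<lambda>t::real. (\<Sum>a\<in>A. c a * t ^ deg a * v a) / t ^ D)
           \<longlongrightarrow> (\<Sum>a\<in>{a\<in>A. deg a = D}. c a * v a)) at_top"
proof -
  have power_ratio: "((\<lambda>t::real. t ^ k / t ^ D) \<longlongrightarrow> (if k = D then 1 else 0)) at_top"
    if "k \<le> D" for k
  proof (cases "k = D")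
    case True
    have "eventually (\<lambda>t::real. 1 = t ^ k / t ^ D) at_top"
      using eventually_gt_at_top[of "0::real"] by eventually_elim (simp add: True)
    then show ?thesis using True tendsto_eventually by (simp add: tendsto_const Lim_transform_eventually)
  next
    case False
    have "eventually (\<lambda>t::real. inverse (t ^ (D - k)) = t ^ k / t ^ D) at_top"
      using eventually_gt_at_top[of "0::real"]
      by eventually_elim (use that in \<open>simp add: power_diff field_simps\<close>)
    moreover have "((\<lambda>t::real. inverse (t ^ (D - k))) \<longlongrightarrow> 0) at_top"
      by (intro tendsto_inverse_0_at_top filterlim_pow_at_top filterlim_ident) (use False that in auto)
    ultimately show ?thesis using False by (simp add: Lim_transform_eventually)
  qed
  have "((\<lambda>t::real. \<Sum>a\<in>A. c a * v a * (t ^ deg a / t ^ D))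
           \<longlongrightarrow> (\<Sum>a\<in>A. c a * v a * (if deg a = D then 1 else 0))) at_top"
    by (intro tendsto_sum tendsto_mult tendsto_const power_ratio) (use assms in auto)
  moreover have "(\<Sum>a\<in>A. c a * v a * (if deg a = D then 1 else 0)) = (\<Sum>a\<in>{a\<in>A. deg a = D}. c a * v a)"
    using assms(1) by (simp add: sum.inter_filter[symmetric] if_distrib cong: if_cong)
  moreover have "(\<lambda>t::real. (\<Sum>a\<in>A. c a * t ^ deg a * v a) / t ^ D)
      = (\<lambda>t. \<Sum>a\<in>A. c a * v a * (t ^ deg a / t ^ D))"
    by (auto simp: sum_divide_distrib mult_ac)
  ultimately show ?thesis by simp
qed

lemma ray_limit:
  assumes "finite A" "\<forall>a\<in>A. sum a UNIV \<le> D" "\<And>x. f x = (\<Sum>a\<in>A. c a * mono_fn a x)"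
  shows "((\<lambda>t. f (t *\<^sub>R x) / t ^ D) \<longlongrightarrow> (\<Sum>a\<in>{a\<in>A. sum a UNIV = D}. c a * mono_fn a x)) at_top"
  using scaled_sum_limit[OF assms(1,2), of c "\<lambda>a. mono_fn a x"]
  by (simp add: assms(3) mono_fn_scale mult.assoc)

lemma ray_limit_exists:
  assumes "poly_span1 D f"
  obtains l where "((\<lambda>t. f (t *\<^sub>R x) / t ^ D) \<longlongrightarrow> l) at_top"
  using assms ray_limit unfolding poly_span_def by blast

text \<open>The top-degree form of any expansion of a polynomial of exact degree \<open>K\<close> is not
  identically zero (otherwise the lower-degree terms alone would represent it).\<close>
lemma top_form_nonzero:
  fixes f :: "real^'n::finite \<Rightarrow> real"
  assumes "poly_deg_eq K f"
    and "finite A" "\<forall>a\<in>A. sum a UNIV \<le> K" "\<And>x. f x = (\<Sum>a\<in>A. c a * mono_fn a x)"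
  obtains x0 where "(\<Sum>a\<in>{a\<in>A. sum a UNIV = K}. c a * mono_fn a x0) \<noteq> 0"
proof -
  have "\<exists>x0. (\<Sum>a\<in>{a\<in>A. sum a UNIV = K}. c a * mono_fn a x0) \<noteq> 0"
  proof (rule ccontr)
    assume "\<nexists>x0. (\<Sum>a\<in>{a\<in>A. sum a UNIV = K}. c a * mono_fn a x0) \<noteq> 0"
    then have top_zero: "(\<Sum>a\<in>{a\<in>A. sum a UNIV = K}. c a * mono_fn a x) = 0" for x
      by auto
    have split: "(\<Sum>a\<in>A. c a * mono_fn a x) = (\<Sum>a\<in>{a\<in>A. sum a UNIV = K}. c a * mono_fn a x)
        + (\<Sum>a\<in>{a\<in>A. sum a UNIV \<noteq> K}. c a * mono_fn a x)" for x
      by (simp add: assms(2) sum.inter_filter flip: sum.distrib) (intro sum.cong refl, simp)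
    have "f x = (\<Sum>a\<in>{a\<in>A. sum a UNIV \<noteq> K}. c a * mono_fn a x)" for x
      using split[of x] top_zero[of x] assms(4) by simp
    then have "poly_fn_on {a. sum a UNIV < K} f"
      by (rule poly_fn_onI[rotated 2]) (use assms(2,3) in auto)
    then show False using assms(1) unfolding poly_deg_eq_def by simp
  qed
  then show ?thesis using that by blast
qed

lemma poly_deg_eq_nonzero:
  assumes "poly_deg_eq K (f :: real^'n::finite \<Rightarrow> real)"
  obtains w where "f w \<noteq> 0"
proof -
  have "poly_fn_on {a. sum a UNIV < K} f" if "\<forall>w. f w = 0"
    by (rule poly_fn_onI[of "{}"]) (use that in auto)
  then show ?thesis using assms that unfolding poly_deg_eq_def by blast
qed

lemma exact_degree_growth:
  assumes "poly_deg_eq K (f :: real^'n::finite \<Rightarrow> real)"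
  obtains x0 l where "l \<noteq> 0" "((\<lambda>t. f (t *\<^sub>R x0) / t ^ K) \<longlongrightarrow> l) at_top"
proof -
  obtain A c where A: "finite A" "\<forall>a\<in>A. sum a UNIV \<le> K" "\<And>x. f x = (\<Sum>a\<in>A. c a * mono_fn a x)"
    using poly_span1_of_deg_eq[OF assms] unfolding poly_span_def by blast
  obtain x0 where "(\<Sum>a\<in>{a\<in>A. sum a UNIV = K}. c a * mono_fn a x0) \<noteq> 0"
    using top_form_nonzero[OF assms A] .
  then show ?thesis using that ray_limit[OF A] by blast
qed

lemma lower_degree_ray_limit:
  assumes "poly2_fn_on {a. sum (fst a) UNIV + sum (snd a) UNIV < D} g"
  shows "((\<lambda>t. g (t *\<^sub>R x, t *\<^sub>R y) / t ^ D) \<longlongrightarrow> 0) at_top"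
proof -
  obtain A c where A: "finite A" "A \<subseteq> {a. sum (fst a) UNIV + sum (snd a) UNIV < D}"
    "\<And>u v. g (u, v) = (\<Sum>a\<in>A. c a * mono_fn (fst a) u * mono_fn (snd a) v)"
    using assms by (rule poly2_fn_onE) (rule that)
  have "\<forall>a\<in>A. pair_deg a \<le> D" using A(2) by (auto simp: pair_deg_def)
  from scaled_sum_limit[OF A(1) this, of c "\<lambda>a. pair_mono a (x, y)"]
  have "((\<lambda>t. (\<Sum>a\<in>A. c a * t ^ pair_deg a * pair_mono a (x, y)) / t ^ D)
          \<longlongrightarrow> (\<Sum>a\<in>{a\<in>A. pair_deg a = D}. c a * pair_mono a (x, y))) at_top" .
  moreover have "{a\<in>A. pair_deg a = D} = {}" using A(2) by (auto simp: pair_deg_def)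
  moreover have "g (t *\<^sub>R x, t *\<^sub>R y) = (\<Sum>a\<in>A. c a * t ^ pair_deg a * pair_mono a (x, y))" for t
    unfolding A(3) by (intro sum.cong refl) (simp add: pair_deg_def pair_mono_def mono_fn_scale power_add mult_ac)
  ultimately show ?thesis by simp
qed

subsection \<open>Homogenization\<close>

text \<open>For R(y) = \<Sum>_a c_a y^a with all |a| \<le> S, the homogenization
  H(r, y) = \<Sum>_a c_a y^a r^(S - |a|); it equals r^S R(y/r) for r \<noteq> 0.\<close>
definition homogenize :: "('n::finite \<Rightarrow> nat) set \<Rightarrow> (('n \<Rightarrow> nat) \<Rightarrow> real) \<Rightarrow> nat \<Rightarrow> real \<Rightarrow> real^'n \<Rightarrow> real" where
  "homogenize A c S r y = (\<Sum>a\<in>A. c a * mono_fn a y * r ^ (S - sum a UNIV))"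

lemma homogenize_one: "homogenize A c S 1 y = (\<Sum>a\<in>A. c a * mono_fn a y)"
  by (simp add: homogenize_def)

lemma homogenize_scale:
  assumes "\<forall>a\<in>A. sum a UNIV \<le> S"
  shows "homogenize A c S (t * r) (t *\<^sub>R y) = t ^ S * homogenize A c S r y"
proof -
  have "c a * mono_fn a (t *\<^sub>R y) * (t * r) ^ (S - sum a UNIV)
      = t ^ S * (c a * mono_fn a y * r ^ (S - sum a UNIV))" if "a \<in> A" for a
  proof -
    have "t ^ S = t ^ sum a UNIV * t ^ (S - sum a UNIV)"
      using assms that by (simp flip: power_add)
    then show ?thesis by (simp add: mono_fn_scale power_mult_distrib mult_ac)
  qed
  then show ?thesis unfolding homogenize_def sum_distrib_left by (rule sum.cong[OF refl])
qed

text \<open>Off r = 0, H(r, y) = r^S R(y/r); this is how \<open>G_n\<close> is recovered.\<close>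
lemma homogenize_eq_dehomogenized:
  assumes "\<forall>a\<in>A. sum a UNIV \<le> S" "r \<noteq> 0"
  shows "homogenize A c S r y = r ^ S * (\<Sum>a\<in>A. c a * mono_fn a (y /\<^sub>R r))"
  using homogenize_scale[OF assms(1), of c r 1 "y /\<^sub>R r"] assms(2) by (simp add: homogenize_one)

lemma homogenize_at_zero:
  assumes "finite A" "\<forall>a\<in>A. sum a UNIV \<le> S"
  shows "homogenize A c S 0 y = (\<Sum>a\<in>{a\<in>A. sum a UNIV = S}. c a * mono_fn a y)"
  unfolding homogenize_def sum.inter_filter[OF assms(1)]
  by (rule sum.cong[OF refl]) (use assms(2) in auto)

lemma homogenize_nonzero:
  assumes "poly_deg_eq S (f :: real^'n::finite \<Rightarrow> real)"
    and A: "finite A" "\<forall>a\<in>A. sum a UNIV \<le> S" "\<And>y. f y = (\<Sum>a\<in>A. c a * mono_fn a y)"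
  obtains y where "homogenize A c S r y \<noteq> 0"
proof (cases "r = 0")
  case True
  obtain y where "(\<Sum>a\<in>{a\<in>A. sum a UNIV = S}. c a * mono_fn a y) \<noteq> 0"
    using top_form_nonzero[OF assms] .
  then show ?thesis using that homogenize_at_zero[OF A(1,2)] True by metis
next
  case False
  obtain w where w: "f w \<noteq> 0" using poly_deg_eq_nonzero[OF assms(1)] .
  have "homogenize A c S r (r *\<^sub>R w) = r ^ S * f w"
    using homogenize_scale[OF A(2), of c r 1 w] by (simp add: homogenize_one A(3))
  then show ?thesis using that w False by (metis mult_eq_0_iff power_eq_0_iff)
qed

lemma homogenize_poly_span2:
  assumes "poly_span1 1 \<rho>" "finite A" "\<forall>a\<in>A. sum a UNIV \<le> S"
  shows "poly_span2 S (\<lambda>p. homogenize A c S (\<rho> (fst p)) (snd p))"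
  unfolding homogenize_def
proof (rule pair_vars.poly_span_sum[OF assms(2)])
  fix a assume "a \<in> A"
  have "poly_span2 (0 + sum a UNIV + (S - sum a UNIV) * 1)
      (\<lambda>p. c a * mono_fn a (snd p) * \<rho> (fst p) ^ (S - sum a UNIV))"
    by (intro pair_vars.poly_span_mult pair_vars.poly_span_const poly_span2_snd_mono
        pair_vars.poly_span_power poly_span2_fst assms(1))
  moreover have "0 + sum a UNIV + (S - sum a UNIV) * 1 = S" using assms(3) \<open>a \<in> A\<close> by auto
  ultimately show "poly_span2 S (\<lambda>p. c a * mono_fn a (snd p) * \<rho> (fst p) ^ (S - sum a UNIV))"
    by simp
qed

lemma homogenized_product_ray_limit:
  assumes A: "\<forall>a\<in>A. sum a UNIV \<le> S"
    and lim_P: "((\<lambda>t. Pf (t *\<^sub>R x0) / t ^ K) \<longlongrightarrow> lP) at_top"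
    and lim_rho: "((\<lambda>t. \<rho> (t *\<^sub>R x0) / t ^ 1) \<longlongrightarrow> l\<rho>) at_top"
  shows "((\<lambda>t. Pf (t *\<^sub>R x0) * homogenize A c S (\<rho> (t *\<^sub>R x0)) (t *\<^sub>R y) / t ^ (K + S))
           \<longlongrightarrow> lP * homogenize A c S l\<rho> y) at_top"
proof -
  have "((\<lambda>t. (Pf (t *\<^sub>R x0) / t ^ K) * homogenize A c S (\<rho> (t *\<^sub>R x0) / t) y)
          \<longlongrightarrow> lP * homogenize A c S l\<rho> y) at_top"
    using lim_rho unfolding homogenize_def by (intro tendsto_intros lim_P) simp
  moreover have "eventually (\<lambda>t. (Pf (t *\<^sub>R x0) / t ^ K) * homogenize A c S (\<rho> (t *\<^sub>R x0) / t) y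
      = Pf (t *\<^sub>R x0) * homogenize A c S (\<rho> (t *\<^sub>R x0)) (t *\<^sub>R y) / t ^ (K + S)) at_top"
    using eventually_gt_at_top[of "0::real"]
  proof eventually_elim
    case (elim t)
    have "homogenize A c S (\<rho> (t *\<^sub>R x0)) (t *\<^sub>R y)
        = t ^ S * homogenize A c S (\<rho> (t *\<^sub>R x0) / t) y"
      using homogenize_scale[OF A, of c t "\<rho> (t *\<^sub>R x0) / t" y] elim by simp
    then show ?case using elim by (simp add: power_add)
  qed
  ultimately show ?thesis by (rule Lim_transform_eventually)
qed

lemma G_exact_degree:
  fixes \<rho> Pf :: "real^'l::finite \<Rightarrow> real" and Rf :: "real^'d::finite \<Rightarrow> real"
  assumes rho: "poly_deg_le 1 \<rho>" and P: "poly_deg_eq K Pf" and R: "poly_deg_eq S Rf"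
  shows "\<exists>g. poly2_deg_eq (K + S) g \<and>
           (\<forall>x y. \<rho> x \<noteq> 0 \<longrightarrow> g (x, y) = Pf x * \<rho> x ^ S * Rf (y /\<^sub>R \<rho> x))"
proof -
  obtain A c where A: "finite A" "\<forall>a\<in>A. sum a UNIV \<le> S" "\<And>y. Rf y = (\<Sum>a\<in>A. c a * mono_fn a y)"
    using poly_span1_of_deg_eq[OF R] unfolding poly_span_def by blast
  define g where "g p = Pf (fst p) * homogenize A c S (\<rho> (fst p)) (snd p)" for p
  have "poly_span2 (K + S) g"
    unfolding g_def using poly_span1_of_deg_eq[OF P] poly_span1_of_deg_le[OF rho] A
    by (intro pair_vars.poly_span_mult poly_span2_fst homogenize_poly_span2)
  moreover have "\<not> poly2_fn_on {a. sum (fst a) UNIV + sum (snd a) UNIV < K + S} g"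
  proof
    assume low: "poly2_fn_on {a. sum (fst a) UNIV + sum (snd a) UNIV < K + S} g"
    obtain x0 lP where "lP \<noteq> 0" and lim_P: "((\<lambda>t. Pf (t *\<^sub>R x0) / t ^ K) \<longlongrightarrow> lP) at_top"
      using exact_degree_growth[OF P] .
    obtain l\<rho> where lim_rho: "((\<lambda>t. \<rho> (t *\<^sub>R x0) / t ^ 1) \<longlongrightarrow> l\<rho>) at_top"
      using ray_limit_exists[OF poly_span1_of_deg_le[OF rho]] .
    obtain y where "homogenize A c S l\<rho> y \<noteq> 0"
      using homogenize_nonzero[OF R A] .
    moreover have "((\<lambda>t. g (t *\<^sub>R x0, t *\<^sub>R y) / t ^ (K + S)) \<longlongrightarrow> lP * homogenize A c S l\<rho> y) at_top"
      unfolding g_def using homogenized_product_ray_limit[OF A(2) lim_P lim_rho] by simp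
    ultimately show False
      using tendsto_unique[OF _ _ lower_degree_ray_limit[OF low]] \<open>lP \<noteq> 0\<close> by force
  qed
  moreover have "g (x, y) = Pf x * \<rho> x ^ S * Rf (y /\<^sub>R \<rho> x)" if "\<rho> x \<noteq> 0" for x y
    using homogenize_eq_dehomogenized[OF A(2) that] by (simp add: g_def A(3))
  ultimately show ?thesis
    unfolding poly2_deg_eq_def using poly2_fn_on_of_span2 by blast
qed

subsection \<open>Integrability of polynomials\<close>

lemma poly_span1_measurable:
  assumes "poly_span1 D f"
  shows "f \<in> borel_measurable borel"
proof -
  obtain A c where "\<forall>x. f x = (\<Sum>a\<in>A. c a * mono_fn a x)"
    using assms unfolding poly_span_def by blast
  then have "f = (\<lambda>x. \<Sum>a\<in>A. c a * (\<Prod>i\<in>UNIV. (x $ i) ^ (a i)))"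
    unfolding mono_fn_def by auto
  moreover have "continuous_on UNIV (\<lambda>x::real^'a. \<Sum>a\<in>A. c a * (\<Prod>i\<in>UNIV. (x $ i) ^ (a i)))"
    by (intro continuous_intros)
  ultimately show ?thesis by (simp add: borel_measurable_continuous_onI)
qed

lemma poly_span1_integrable:
  fixes \<mu> :: "(real^'n::finite) measure"
  assumes sets: "sets \<mu> = sets borel" and moments: "\<And>m. integrable \<mu> (\<lambda>x. norm x ^ m)"
    and "poly_span1 D f"
  shows "integrable \<mu> f"
proof -
  obtain A c where f: "\<forall>x. f x = (\<Sum>a\<in>A. c a * mono_fn a x)"
    using assms(3) unfolding poly_span_def by blast
  have "poly_span1 (sum a UNIV) (mono_fn a)" for a
    unfolding poly_span_def by (rule exI[of _ "{a}"], rule exI[of _ "\<lambda>_. 1"]) simp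
  then have "mono_fn a \<in> borel_measurable \<mu>" for a
    unfolding measurable_cong_sets[OF sets refl] by (rule poly_span1_measurable)
  then have "integrable \<mu> (mono_fn a)" for a
    by (rule Bochner_Integration.integrable_bound[OF moments[of "sum a UNIV"]])
       (auto simp: mono_fn_bound)
  then have "integrable \<mu> (\<lambda>x. \<Sum>a\<in>A. c a * mono_fn a x)" by auto
  moreover have "f = (\<lambda>x. \<Sum>a\<in>A. c a * mono_fn a x)" using f by auto
  ultimately show ?thesis by simp
qed

subsection \<open>Independence and factorization of integrals\<close>

lemma (in prob_space) indep_var_of_product_rule:
  assumes X: "X \<in> measurable M S" and Y: "Y \<in> measurable M T"
    and prod: "\<And>A B. A \<in> sets S \<Longrightarrow> B \<in> sets T \<Longrightarrow>
      prob {x \<in> space M. X x \<in> A \<and> Y x \<in> B} = prob {x \<in> space M. X x \<in> A} * prob {x \<in> space M. Y x \<in> B}"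
  shows "indep_var S X T Y"
  unfolding indep_var_distribution_eq
proof (intro conjI X Y pair_measure_eqI)
  show "sigma_finite_measure (distr M S X)" "sigma_finite_measure (distr M T Y)"
    by (intro prob_space_imp_sigma_finite prob_space_distr X Y)+
  fix A B assume A: "A \<in> sets (distr M S X)" and B: "B \<in> sets (distr M T Y)"
  have XY: "(\<lambda>x. (X x, Y x)) \<in> measurable M (S \<Otimes>\<^sub>M T)" using X Y by (rule measurable_Pair)
  have "emeasure (distr M (S \<Otimes>\<^sub>M T) (\<lambda>x. (X x, Y x))) (A \<times> B)
      = prob {x \<in> space M. X x \<in> A \<and> Y x \<in> B}"
    using A B XY by (simp add: emeasure_distr emeasure_eq_measure vimage_def Int_def conj_commute)
  also have "\<dots> = prob {x \<in> space M. X x \<in> A} * prob {x \<in> space M. Y x \<in> B}"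
    using A B by (simp add: prod)
  also have "\<dots> = emeasure (distr M S X) A * emeasure (distr M T Y) B"
    using A B X Y by (simp add: emeasure_distr emeasure_eq_measure vimage_def Int_def conj_commute ennreal_mult)
  finally show "emeasure (distr M S X) A * emeasure (distr M T Y) B
      = emeasure (distr M (S \<Otimes>\<^sub>M T) (\<lambda>x. (X x, Y x))) (A \<times> B)" ..
qed simp

lemma polynomial_integral_factorization:
  fixes W :: "((real^'l::finite) \<times> (real^'d::finite)) measure" and \<rho> :: "real^'l \<Rightarrow> real"
  assumes W: "prob_space W" "sets W = sets borel"
    and rho: "poly_span1 1 \<rho>"
    and indep: "\<And>A B. A \<in> sets borel \<Longrightarrow> B \<in> sets borel \<Longrightarrow>
        measure W {p \<in> space W. fst p \<in> A \<and> snd p /\<^sub>R \<rho> (fst p) \<in> B} =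
        measure W {p \<in> space W. fst p \<in> A} * measure W {p \<in> space W. snd p /\<^sub>R \<rho> (fst p) \<in> B}"
    and mom_X: "\<And>m. integrable (distr W borel fst) (\<lambda>x. norm x ^ m)"
    and mom_Z: "\<And>m. integrable (distr W borel (\<lambda>p. snd p /\<^sub>R \<rho> (fst p))) (\<lambda>z. norm z ^ m)"
    and f: "poly_span1 D1 f" and h: "poly_span1 D2 h"
  shows "(\<integral>p. f (fst p) * h (snd p /\<^sub>R \<rho> (fst p)) \<partial>W) =
    (\<integral>x. f x \<partial>distr W borel fst) * (\<integral>z. h z \<partial>distr W borel (\<lambda>p. snd p /\<^sub>R \<rho> (fst p)))"
proof -
  interpret prob_space W by fact
  define Z where "Z p = snd p /\<^sub>R \<rho> (fst p)" for p :: "(real^'l) \<times> (real^'d)"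
  have X: "fst \<in> borel_measurable W" and Y: "snd \<in> borel_measurable W"
    unfolding measurable_cong_sets[OF W(2) refl]
    by (intro borel_measurable_continuous_onI continuous_intros)+
  then have Z: "Z \<in> borel_measurable W"
    unfolding Z_def using poly_span1_measurable[OF rho] by measurable
  have f_meas: "f \<in> borel_measurable borel" and h_meas: "h \<in> borel_measurable borel"
    using poly_span1_measurable[OF f] poly_span1_measurable[OF h] .
  have "indep_var borel (\<lambda>p. f (fst p)) borel (\<lambda>p. h (Z p))"
  proof (rule indep_var_of_product_rule)
    show "(\<lambda>p. f (fst p)) \<in> borel_measurable W" "(\<lambda>p. h (Z p)) \<in> borel_measurable W"
      using X Z f_meas h_meas by measurable
    fix A B :: "real set" assume "A \<in> sets borel" "B \<in> sets borel"
    then have "f -` A \<in> sets borel" "h -` B \<in> sets borel"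
      using f_meas h_meas by (auto dest: measurable_sets)
    from indep[OF this] show "prob {p \<in> space W. f (fst p) \<in> A \<and> h (Z p) \<in> B}
        = prob {p \<in> space W. f (fst p) \<in> A} * prob {p \<in> space W. h (Z p) \<in> B}"
      by (simp add: Z_def)
  qed
  moreover have "integrable W (\<lambda>p. f (fst p))" "integrable W (\<lambda>p. h (Z p))"
    using poly_span1_integrable[OF _ mom_X f] poly_span1_integrable[OF _ mom_Z h]
      integrable_distr_eq[OF X f_meas] integrable_distr_eq[OF Z h_meas]
    by (simp_all add: Z_def[abs_def])
  ultimately have "(\<integral>p. f (fst p) * h (Z p) \<partial>W) = (\<integral>p. f (fst p) \<partial>W) * (\<integral>p. h (Z p) \<partial>W)"
    by (rule indep_var_lebesgue_integral)
  then show ?thesis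
    using integral_distr[OF X f_meas] integral_distr[OF Z h_meas] unfolding Z_def[abs_def] by simp
qed

lemma G_product_integral:
  fixes W :: "((real ^ 'l::finite) \<times> (real ^ 'd::finite)) measure"
    and \<rho> :: "real ^ 'l \<Rightarrow> real"
    and P :: "nat \<Rightarrow> ('l \<Rightarrow> nat) \<Rightarrow> real ^ 'l \<Rightarrow> real"
    and R :: "('d \<Rightarrow> nat) \<Rightarrow> real ^ 'd \<Rightarrow> real"
    and k k' :: "'l \<Rightarrow> nat" and s s' :: "'d \<Rightarrow> nat"
  assumes W: "prob_space W" "sets W = sets borel"
    and rho_poly: "poly_deg_le 1 \<rho>"
    and indep: "\<And>A B. A \<in> sets borel \<Longrightarrow> B \<in> sets borel \<Longrightarrow>
        measure W {p \<in> space W. fst p \<in> A \<and> snd p /\<^sub>R \<rho> (fst p) \<in> B} =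
        measure W {p \<in> space W. fst p \<in> A} * measure W {p \<in> space W. snd p /\<^sub>R \<rho> (fst p) \<in> B}"
    and mom_X: "\<And>m. integrable (distr W borel fst) (\<lambda>x. norm x ^ m)"
    and mom_Z: "\<And>m. integrable (distr W borel (\<lambda>p. snd p /\<^sub>R \<rho> (fst p))) (\<lambda>z. norm z ^ m)"
    and P_deg: "\<And>m k. poly_deg_eq (sum k UNIV) (P m k)"
    and R_deg: "\<And>s. poly_deg_eq (sum s UNIV) (R s)"
  defines "S \<equiv> sum s UNIV" and "S' \<equiv> sum s' UNIV"
  shows "(\<integral>p. Gfun P \<rho> R k s p * Gfun P \<rho> R k' s' p \<partial>W)
      = (\<integral>x. P S k x * P S' k' x * \<rho> x ^ (S + S') \<partial>distr W borel fst)
        * (\<integral>z. R s z * R s' z \<partial>distr W borel (\<lambda>p. snd p /\<^sub>R \<rho> (fst p)))"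
proof -
  have G_product: "Gfun P \<rho> R k s p * Gfun P \<rho> R k' s' p
      = P S k (fst p) * P S' k' (fst p) * \<rho> (fst p) ^ (S + S')
        * (R s (snd p /\<^sub>R \<rho> (fst p)) * R s' (snd p /\<^sub>R \<rho> (fst p)))" for p
    by (cases p) (simp add: Gfun_def S_def S'_def power_add mult_ac)
  have F_poly: "poly_span1 (sum k UNIV + sum k' UNIV + (S + S') * 1)
      (\<lambda>x. P S k x * P S' k' x * \<rho> x ^ (S + S'))"
    using poly_span1_of_deg_eq[OF P_deg] poly_span1_of_deg_le[OF rho_poly]
    by (intro vars.poly_span_mult vars.poly_span_power)
  have H_poly: "poly_span1 (S + S') (\<lambda>z. R s z * R s' z)"
    unfolding S_def S'_def using poly_span1_of_deg_eq[OF R_deg] by (intro vars.poly_span_mult)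
  show ?thesis
    unfolding G_product
    by (rule polynomial_integral_factorization[OF W poly_span1_of_deg_le[OF rho_poly] indep
          mom_X mom_Z F_poly H_poly])
qed

theorem mainTheorem1:
  fixes W :: "((real ^ 'l::finite) \<times> (real ^ 'd::finite)) measure"
    and \<rho> :: "real ^ 'l \<Rightarrow> real"
    and P :: "nat \<Rightarrow> ('l \<Rightarrow> nat) \<Rightarrow> real ^ 'l \<Rightarrow> real"
    and R :: "('d \<Rightarrow> nat) \<Rightarrow> real ^ 'd \<Rightarrow> real"
  assumes W: "prob_space W" "sets W = sets borel"
    and rho_poly: "poly_deg_le 1 \<rho>"
    and rho_nz: "AE p in W. \<rho> (fst p) \<noteq> 0"
    and indep: "\<And>A B. A \<in> sets borel \<Longrightarrow> B \<in> sets borel \<Longrightarrow>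
        measure W {p \<in> space W. fst p \<in> A \<and> snd p /\<^sub>R \<rho> (fst p) \<in> B} =
        measure W {p \<in> space W. fst p \<in> A} * measure W {p \<in> space W. snd p /\<^sub>R \<rho> (fst p) \<in> B}"
    and mom_X: "\<And>m. integrable (distr W borel fst) (\<lambda>x. norm x ^ m)"
    and mom_Z: "\<And>m. integrable (distr W borel (\<lambda>p. snd p /\<^sub>R \<rho> (fst p))) (\<lambda>z. norm z ^ m)"
    and P_deg: "\<And>m k. poly_deg_eq (sum k UNIV) (P m k)"
    and P_orth: "\<And>m k k'. k \<noteq> k' \<Longrightarrow>
        (\<integral>x. P m k x * P m k' x * \<rho> x ^ (2 * m) \<partial>(distr W borel fst)) = 0"
    and R_deg: "\<And>s. poly_deg_eq (sum s UNIV) (R s)"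
    and R_orth: "\<And>s s'. s \<noteq> s' \<Longrightarrow>
        (\<integral>z. R s z * R s' z \<partial>(distr W borel (\<lambda>p. snd p /\<^sub>R \<rho> (fst p)))) = 0"
  shows "(\<forall>k s. \<exists>g. poly2_deg_eq (sum k UNIV + sum s UNIV) g \<and>
            (\<forall>x y. \<rho> x \<noteq> 0 \<longrightarrow> g (x, y) = Gfun P \<rho> R k s (x, y)))
       \<and> (\<forall>k s k' s'. (\<integral>p. Gfun P \<rho> R k s p * Gfun P \<rho> R k' s' p \<partial>W) =
            (if (k, s) = (k', s') then
               (\<integral>x. (P (sum s UNIV) k x)\<^sup>2 * \<rho> x ^ (2 * sum s UNIV) \<partial>(distr W borel fst)) *
               (\<integral>z. (R s z)\<^sup>2 \<partial>(distr W borel (\<lambda>p. snd p /\<^sub>R \<rho> (fst p))))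
             else 0))"
proof (intro conjI allI)
  fix k :: "'l \<Rightarrow> nat" and s :: "'d \<Rightarrow> nat"
  show "\<exists>g. poly2_deg_eq (sum k UNIV + sum s UNIV) g \<and>
      (\<forall>x y. \<rho> x \<noteq> 0 \<longrightarrow> g (x, y) = Gfun P \<rho> R k s (x, y))"
    using G_exact_degree[OF rho_poly P_deg R_deg] by (simp add: Gfun_def)
next
  fix k k' :: "'l \<Rightarrow> nat" and s s' :: "'d \<Rightarrow> nat"
  define S where "S = sum s UNIV"
  have factor: "(\<integral>p. Gfun P \<rho> R k s p * Gfun P \<rho> R k' s' p \<partial>W)
      = (\<integral>x. P S k x * P (sum s' UNIV) k' x * \<rho> x ^ (S + sum s' UNIV) \<partial>distr W borel fst)
        * (\<integral>z. R s z * R s' z \<partial>distr W borel (\<lambda>p. snd p /\<^sub>R \<rho> (fst p)))"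
    unfolding S_def by (rule G_product_integral[OF W rho_poly indep mom_X mom_Z P_deg R_deg])
  consider "s \<noteq> s'" | "s = s'" "k \<noteq> k'" | "s = s'" "k = k'" by blast
  then show "(\<integral>p. Gfun P \<rho> R k s p * Gfun P \<rho> R k' s' p \<partial>W) =
      (if (k, s) = (k', s') then
         (\<integral>x. (P (sum s UNIV) k x)\<^sup>2 * \<rho> x ^ (2 * sum s UNIV) \<partial>(distr W borel fst)) *
         (\<integral>z. (R s z)\<^sup>2 \<partial>(distr W borel (\<lambda>p. snd p /\<^sub>R \<rho> (fst p))))
       else 0)"
  proof cases
    case 1
    then show ?thesis using factor R_orth by simp
  next
    case 2
    then show ?thesis using factor P_orth[of k k' S] by (simp add: S_def mult_2)
  next
    case 3
    then show ?thesis using factor by (simp add: S_def mult_2 power2_eq_square)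
  qed
qed

end
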